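(* Let $\epsilon>0$. For every $\widehat\phi\in\mathcal{M}_\epsilon$ there exists a unique $\widehat\psi\in\mathcal{M}$ satisfying $$\frac{\widehat\psi_{i+1,j}-\widehat\psi_{i,j}}{\Delta t}-\frac{\sigma^2}{2}\frac{\widehat\psi_{i+1,j+1}-2\widehat\psi_{i+1,j}+\widehat\psi_{i+1,j-1}}{(\Delta x)^2}=\frac{1}{\sigma^2}f(x_j,\widehat\phi_{i+1,j}\widehat\psi_{i+1,j})\widehat\psi_{i+1,j},\quad 0\le i\le I-1,\ 0\le j\le J,$$ with $\widehat\psi_{0,j}=\frac{m_0(x_j)}{\widehat\phi_{0,j}}$ for all $j$ and the conventions $\widehat\psi_{i,-1}=\widehat\psi_{i,0}$, $\widehat\psi_{i,J+1}=\widehat\psi_{i,J}$. Hence $\widehat\Psi:\widehat\phi\in\mathcal{M}_\epsilon\mapsto\widehat\psi\in\mathcal{M}$ is well defined, and moreover $\widehat\Psi(\widehat\phi)\in\mathcal{M}_0$ for every $\widehat\phi\in\mathcal{M}_\epsilon$.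
   Context: Discrete setting: $\Omega=(0,1)$, $T>0$, $\sigma>0$; $m_0:[0,1]\to\mathbb{R}$ bounded with $m_0\ge0$. $f:[0,1]\times\mathbb{R}\to\mathbb{R}$ is continuous and nonincreasing in its second variable, bounded, and $f\le0$. For positive integers $I,J$: $\Delta t=T/I$, $\Delta x=1/J$, $x_j=j\Delta x$. $\mathcal{M}$ is the set of real matrices $(m_{i,j})_{0\le i\le I,0\le j\le J}$ and $\mathcal{M}_\epsilon=\{m\in\mathcal{M}: m_{i,j}\ge\epsilon\ \forall i,j\}$. *)

theory Defs
  imports "HOL-Analysis.Analysis"
begin

text \<open>Matrices (m_{i,j}), 0 \<le> i \<le> I, 0 \<le> j \<le> J, are represented as functions
  nat \<Rightarrow> nat \<Rightarrow> real; only the values on the grid matter.\<close>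

definition in_M_eps :: "nat \<Rightarrow> nat \<Rightarrow> real \<Rightarrow> (nat \<Rightarrow> nat \<Rightarrow> real) \<Rightarrow> bool" where
  "in_M_eps I J \<epsilon> m \<longleftrightarrow> (\<forall>i\<le>I. \<forall>j\<le>J. m i j \<ge> \<epsilon>)"

definition left_nb :: "(nat \<Rightarrow> nat \<Rightarrow> real) \<Rightarrow> nat \<Rightarrow> nat \<Rightarrow> real" where
  "left_nb m i j = (if j = 0 then m i 0 else m i (j - 1))"

definition right_nb :: "nat \<Rightarrow> (nat \<Rightarrow> nat \<Rightarrow> real) \<Rightarrow> nat \<Rightarrow> nat \<Rightarrow> real" where
  "right_nb J m i j = (if j = J then m i J else m i (j + 1))"

definition psi_scheme ::
  "real \<Rightarrow> real \<Rightarrow> nat \<Rightarrow> nat \<Rightarrow> (real \<Rightarrow> real \<Rightarrow> real) \<Rightarrow> (real \<Rightarrow> real)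
   \<Rightarrow> (nat \<Rightarrow> nat \<Rightarrow> real) \<Rightarrow> (nat \<Rightarrow> nat \<Rightarrow> real) \<Rightarrow> bool" where
  "psi_scheme T \<sigma> I J f m0 \<phi> \<psi> \<longleftrightarrow>
     (let dt = T / real I; dx = 1 / real J; x = (\<lambda>j::nat. real j * dx) in
       (\<forall>i<I. \<forall>j\<le>J.
          (\<psi> (i+1) j - \<psi> i j) / dt
          - \<sigma>^2 / 2 * (right_nb J \<psi> (i+1) j - 2 * \<psi> (i+1) j + left_nb \<psi> (i+1) j) / dx^2
          = 1 / \<sigma>^2 * f (x j) (\<phi> (i+1) j * \<psi> (i+1) j) * \<psi> (i+1) j)
       \<and> (\<forall>j\<le>J. \<psi> 0 j = m0 (x j) / \<phi> 0 j))"

end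

theory Submission imports Defs begin

(* Each time step of the scheme is a nonlinear elliptic system on the grid {0..J}:
       a u_j - c (Lap u)_j + g_j(u_j) = p_j,
   where Lap is the discrete Neumann Laplacian, a = 1/dt > 0, c = sigma^2/(2 dx^2) >= 0,
   p = psi_i / dt >= 0 and g_j(s) = -f(x_j, phi_{i+1,j} s) s / sigma^2 is continuous,
   has the sign of s and is nondecreasing on [0,oo) (because f <= 0 is nonincreasing
   and phi >= eps > 0).
   1. Discrete maximum principle: a solution with p >= 0 is nonnegative, and a
      comparison principle for nonnegative solutions yields uniqueness.
   2. Existence by monotone iteration: from 0, solving the decoupled scalar equations
      (a+2c) u_j + g_j(u_j) = p_j + c (neighbours of the previous iterate) gives an
      increasing bounded sequence whose limit solves the system.
   3. A generic time-marching argument turns a well-posed, positivity preserving step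
      into a unique nonnegative solution of the whole scheme.
   Proposition 9 follows by rewriting the scheme as such a time marching. *)

section \<open>The discrete Neumann Laplacian\<close>

definition nbr :: "nat \<Rightarrow> nat \<Rightarrow> nat" where
  "nbr J j = (if j = J then J else Suc j)"

definition nbl :: "nat \<Rightarrow> nat" where
  "nbl j = (if j = 0 then 0 else j - 1)"

definition lap :: "nat \<Rightarrow> (nat \<Rightarrow> real) \<Rightarrow> nat \<Rightarrow> real" where
  "lap J u j = u (nbr J j) - 2 * u j + u (nbl j)"

lemma nbr_le: "j \<le> J \<Longrightarrow> nbr J j \<le> J"
  by (simp add: nbr_def)

lemma nbl_le: "j \<le> J \<Longrightarrow> nbl j \<le> J"
  by (auto simp: nbl_def)

lemma lap_nonneg_at_min:
  assumes "k \<le> J" and "\<forall>j\<le>J. u k \<le> u j"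
  shows "0 \<le> lap J u k"
proof -
  have "u k \<le> u (nbr J k)" and "u k \<le> u (nbl k)"
    using assms nbr_le nbl_le by blast+
  then show ?thesis unfolding lap_def by linarith
qed

lemma grid_argmin:
  fixes u :: "nat \<Rightarrow> real"
  obtains k where "k \<le> J" and "\<forall>j\<le>J. u k \<le> u j"
proof -
  have "Min (u ` {..J}) \<in> u ` {..J}" by (intro Min_in) auto
  then obtain k where "k \<le> J" "u k = Min (u ` {..J})" by (metis atMost_iff imageE)
  then show ?thesis using that by auto
qed

section \<open>One implicit time step: a discrete semilinear elliptic system\<close>

definition nonneg_on :: "nat \<Rightarrow> (nat \<Rightarrow> real) \<Rightarrow> bool" where
  "nonneg_on J u \<longleftrightarrow> (\<forall>j\<le>J. 0 \<le> u j)"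

definition step_eq ::
  "nat \<Rightarrow> real \<Rightarrow> real \<Rightarrow> (nat \<Rightarrow> real \<Rightarrow> real) \<Rightarrow> (nat \<Rightarrow> real) \<Rightarrow> (nat \<Rightarrow> real) \<Rightarrow> bool" where
  "step_eq J a c g p u \<longleftrightarrow> (\<forall>j\<le>J. a * u j - c * lap J u j + g j (u j) = p j)"

definition admissible_reaction :: "nat \<Rightarrow> (nat \<Rightarrow> real \<Rightarrow> real) \<Rightarrow> bool" where
  "admissible_reaction J g \<longleftrightarrow> (\<forall>j\<le>J. continuous_on UNIV (g j)
     \<and> (\<forall>s\<le>0. g j s \<le> 0) \<and> (\<forall>s\<ge>0. 0 \<le> g j s) \<and> mono_on {0..} (g j))"

text \<open>Discrete maximum principle: nonnegative data give a nonnegative solution.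
  At a negative minimum every term of the left-hand side would be nonpositive and
  the first one negative.\<close>
lemma step_eq_nonneg:
  assumes "a > 0" and "c \<ge> 0" and "nonneg_on J p"
    and sign: "\<forall>j\<le>J. \<forall>s<0. g j s \<le> 0"
    and sol: "step_eq J a c g p u"
  shows "nonneg_on J u"
proof (rule ccontr)
  assume "\<not> nonneg_on J u"
  then obtain j where j: "j \<le> J" "u j < 0" unfolding nonneg_on_def by force
  obtain k where k: "k \<le> J" "\<forall>j\<le>J. u k \<le> u j" using grid_argmin by blast
  have neg: "u k < 0" using k j by force
  have "0 \<le> c * lap J u k" using lap_nonneg_at_min[OF k] \<open>c \<ge> 0\<close> by simp
  moreover have "g k (u k) \<le> 0" using sign k neg by blast
  moreover have "a * u k < 0" using \<open>a > 0\<close> neg by (simp add: mult_pos_neg)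
  moreover have "a * u k - c * lap J u k + g k (u k) = p k" using sol k unfolding step_eq_def by blast
  moreover have "0 \<le> p k" using \<open>nonneg_on J p\<close> k unfolding nonneg_on_def by blast
  ultimately show False by linarith
qed

text \<open>Comparison principle: ordered data give ordered nonnegative solutions.
  At a minimum of v - u the Laplacian of v - u is nonnegative.\<close>
lemma step_eq_comparison:
  assumes "a > 0" and "c \<ge> 0" and "\<forall>j\<le>J. p j \<le> q j"
    and mono: "\<forall>j\<le>J. mono_on {0..} (g j)"
    and "step_eq J a c g p u" and "step_eq J a c g q v" and "nonneg_on J v"
  shows "\<forall>j\<le>J. u j \<le> v j"
proof (rule ccontr)
  assume "\<not> ?thesis"
  then obtain j where j: "j \<le> J" "v j < u j" by force
  obtain k where k: "k \<le> J" "\<forall>j\<le>J. v k - u k \<le> v j - u j"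
    using grid_argmin[of J "\<lambda>j. v j - u j"] by blast
  have gap: "v k < u k" using k j by force
  have "0 \<le> lap J (\<lambda>j. v j - u j) k" using lap_nonneg_at_min[OF k] .
  then have "c * lap J u k \<le> c * lap J v k"
    using \<open>c \<ge> 0\<close> unfolding lap_def by (simp add: mult_left_mono)
  moreover have "g k (v k) \<le> g k (u k)"
  proof (rule mono_onD[where f = "g k"])
    show "mono_on {0..} (g k)" using mono k by blast
    show "v k \<in> {0..}" "u k \<in> {0..}"
      using \<open>nonneg_on J v\<close> k gap unfolding nonneg_on_def by auto
  qed (use gap in simp)
  moreover have "a * v k < a * u k" using \<open>a > 0\<close> gap by simp
  moreover have "a * u k - c * lap J u k + g k (u k) = p k"
    and "a * v k - c * lap J v k + g k (v k) = q k"
    using assms(5,6) k unfolding step_eq_def by blast+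
  moreover have "p k \<le> q k" using assms(3) k by blast
  ultimately show False by linarith
qed

lemma step_eq_unique:
  assumes "a > 0" and "c \<ge> 0" and "nonneg_on J p" and "admissible_reaction J g"
    and "step_eq J a c g p u" and "step_eq J a c g p v"
  shows "\<forall>j\<le>J. u j = v j"
proof -
  have sign: "\<forall>j\<le>J. \<forall>s<0. g j s \<le> 0" and mono: "\<forall>j\<le>J. mono_on {0..} (g j)"
    using \<open>admissible_reaction J g\<close> unfolding admissible_reaction_def by auto
  have "nonneg_on J u" and "nonneg_on J v"
    using step_eq_nonneg[OF assms(1-3) sign] assms(5,6) by blast+
  then show ?thesis
    using step_eq_comparison[OF assms(1,2) _ mono] assms(5,6) by (meson order.antisym order_refl)
qed

subsection \<open>Existence by monotone iteration\<close>

lemma coercive_attains: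
  fixes h :: "real \<Rightarrow> real"
  assumes "continuous_on {0..} h" and "h 0 = 0" and "b > 0"
    and coercive: "\<And>s. 0 \<le> s \<Longrightarrow> b * s \<le> h s" and "0 \<le> r"
  shows "\<exists>s. 0 \<le> s \<and> s \<le> r / b \<and> h s = r"
proof (rule IVT')
  show "h 0 \<le> r" using assms by simp
  show "r \<le> h (r / b)" using coercive[of "r / b"] assms by simp
  show "0 \<le> r / b" using assms by simp
  show "continuous_on {0..r / b} h" using assms(1) by (rule continuous_on_subset) auto
qed

lemma reaction_inverse:
  assumes "admissible_reaction J g" and "b > 0"
  obtains S where
    "\<And>j r. j \<le> J \<Longrightarrow> 0 \<le> r \<Longrightarrow> 0 \<le> S j r \<and> S j r \<le> r / b \<and> b * S j r + g j (S j r) = r"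
    and "\<And>j r r'. j \<le> J \<Longrightarrow> 0 \<le> r \<Longrightarrow> r \<le> r' \<Longrightarrow> S j r \<le> S j r'"
proof
  define S where "S j r = (SOME s. 0 \<le> s \<and> s \<le> r / b \<and> b * s + g j s = r)" for j r
  have g: "continuous_on UNIV (g j)" "g j 0 = 0" "\<And>s. 0 \<le> s \<Longrightarrow> 0 \<le> g j s"
    "mono_on {0..} (g j)" if "j \<le> J" for j
    using assms(1) that unfolding admissible_reaction_def by (auto intro: order.antisym)
  show S: "0 \<le> S j r \<and> S j r \<le> r / b \<and> b * S j r + g j (S j r) = r" if "j \<le> J" "0 \<le> r" for j r
    unfolding S_def
  proof (rule someI_ex, rule coercive_attains)
    show "continuous_on {0..} (\<lambda>s. b * s + g j s)"
      using g(1)[OF \<open>j \<le> J\<close>] by (auto intro!: continuous_intros intro: continuous_on_subset)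
  qed (use g \<open>b > 0\<close> that in auto)
  show "S j r \<le> S j r'" if "j \<le> J" "0 \<le> r" "r \<le> r'" for j r r'
  proof (rule ccontr)
    assume "\<not> S j r \<le> S j r'"
    moreover have "0 \<le> S j r'" using S that by fastforce
    ultimately have "g j (S j r') \<le> g j (S j r)" and "b * S j r' < b * S j r"
      using g(4)[OF \<open>j \<le> J\<close>] \<open>b > 0\<close> by (auto intro: mono_onD)
    then show False using S[of j r] S[of j r'] that by linarith
  qed
qed

text \<open>Right-hand side of the Jacobi splitting (a+2c) u_j + g_j(u_j) = p_j + c (u_{j+1} + u_{j-1})
  of the system.\<close>
definition jacobi_rhs :: "nat \<Rightarrow> real \<Rightarrow> (nat \<Rightarrow> real) \<Rightarrow> (nat \<Rightarrow> real) \<Rightarrow> nat \<Rightarrow> real" where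
  "jacobi_rhs J c p v j = p j + c * (v (nbr J j) + v (nbl j))"

lemma step_eq_iff_jacobi:
  "step_eq J a c g p u \<longleftrightarrow> (\<forall>j\<le>J. (a + 2 * c) * u j + g j (u j) = jacobi_rhs J c p u j)"
  unfolding step_eq_def jacobi_rhs_def lap_def by (simp add: algebra_simps)

lemma jacobi_rhs_mono:
  assumes "c \<ge> 0" and "j \<le> J" and "\<forall>k\<le>J. v k \<le> w k"
  shows "jacobi_rhs J c p v j \<le> jacobi_rhs J c p w j"
proof -
  have "v (nbr J j) + v (nbl j) \<le> w (nbr J j) + w (nbl j)"
    using assms(2,3) nbr_le nbl_le by (simp add: add_mono)
  then show ?thesis unfolding jacobi_rhs_def using \<open>c \<ge> 0\<close> by (simp add: mult_left_mono)
qed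

definition in_box :: "nat \<Rightarrow> real \<Rightarrow> (nat \<Rightarrow> real) \<Rightarrow> bool" where
  "in_box J B v \<longleftrightarrow> (\<forall>k\<le>J. 0 \<le> v k \<and> v k \<le> B)"

lemma jacobi_rhs_bounds:
  assumes "c \<ge> 0" and "j \<le> J" and "0 \<le> p j" and "p j \<le> a * B" and "in_box J B v"
  shows "0 \<le> jacobi_rhs J c p v j" and "jacobi_rhs J c p v j \<le> (a + 2 * c) * B"
proof -
  have "0 \<le> v (nbr J j)" "v (nbr J j) \<le> B" "0 \<le> v (nbl j)" "v (nbl j) \<le> B"
    using assms(2,5) nbr_le nbl_le unfolding in_box_def by blast+
  then have "0 \<le> v (nbr J j) + v (nbl j)" and "v (nbr J j) + v (nbl j) \<le> 2 * B" by linarith+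
  then have "0 \<le> c * (v (nbr J j) + v (nbl j))" and "c * (v (nbr J j) + v (nbl j)) \<le> c * (2 * B)"
    using \<open>c \<ge> 0\<close> by (simp_all add: mult_left_mono)
  then show "0 \<le> jacobi_rhs J c p v j" and "jacobi_rhs J c p v j \<le> (a + 2 * c) * B"
    using assms(3,4) unfolding jacobi_rhs_def by (simp_all add: algebra_simps)
qed

lemma monotone_iteration:
  fixes F :: "(nat \<Rightarrow> real) \<Rightarrow> nat \<Rightarrow> real"
  assumes "0 \<le> B"
    and into: "\<And>v. in_box J B v \<Longrightarrow> in_box J B (F v)"
    and mono: "\<And>v w. in_box J B v \<Longrightarrow> in_box J B w \<Longrightarrow> \<forall>k\<le>J. v k \<le> w k \<Longrightarrow> \<forall>j\<le>J. F v j \<le> F w j"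
  obtains V where "\<And>n. in_box J B ((F ^^ n) (\<lambda>_. 0))"
    and "\<And>j. j \<le> J \<Longrightarrow> (\<lambda>n. (F ^^ n) (\<lambda>_. 0) j) \<longlonglongrightarrow> V j"
proof -
  define U where "U n = (F ^^ n) (\<lambda>_. 0)" for n
  have box: "in_box J B (U n)" for n
    by (induction n) (use \<open>0 \<le> B\<close> into in \<open>auto simp: U_def in_box_def\<close>)
  have incr: "\<forall>j\<le>J. U n j \<le> U (Suc n) j" for n
  proof (induction n)
    case 0
    show ?case using box[of 1] by (simp add: U_def in_box_def)
  next
    case (Suc n)
    show ?case using mono[OF box box Suc] by (simp add: U_def)
  qed
  have conv: "(\<lambda>n. U n j) \<longlonglongrightarrow> (SUP n. U n j)" if "j \<le> J" for j
  proof (rule LIMSEQ_incseq_SUP)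
    show "bdd_above (range (\<lambda>n. U n j))"
      using box that by (auto simp: in_box_def intro!: bdd_aboveI2[where M = B])
    show "incseq (\<lambda>n. U n j)" using incr that by (auto intro!: incseq_SucI)
  qed
  show ?thesis
    by (rule that[of "\<lambda>j. SUP n. U n j"]) (use box conv in \<open>simp_all add: U_def\<close>)
qed

lemma step_eq_limit:
  assumes cont: "\<forall>j\<le>J. continuous_on UNIV (g j)"
    and conv: "\<And>j. j \<le> J \<Longrightarrow> (\<lambda>n. U n j) \<longlonglongrightarrow> V j"
    and iter: "\<And>n j. j \<le> J \<Longrightarrow> (a + 2 * c) * U (Suc n) j + g j (U (Suc n) j) = jacobi_rhs J c p (U n) j"
  shows "step_eq J a c g p V"
  unfolding step_eq_iff_jacobi
proof (intro allI impI)
  fix j assume "j \<le> J"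
  have "(\<lambda>n. (a + 2 * c) * U (Suc n) j + g j (U (Suc n) j)) \<longlonglongrightarrow> (a + 2 * c) * V j + g j (V j)"
    using conv[OF \<open>j \<le> J\<close>] cont \<open>j \<le> J\<close>
    by (intro tendsto_intros continuous_on_tendsto_compose[of UNIV "g j"]) (auto intro: LIMSEQ_Suc)
  moreover have "(\<lambda>n. jacobi_rhs J c p (U n) j) \<longlonglongrightarrow> jacobi_rhs J c p V j"
    unfolding jacobi_rhs_def using \<open>j \<le> J\<close> by (intro tendsto_intros conv nbr_le nbl_le)
  ultimately show "(a + 2 * c) * V j + g j (V j) = jacobi_rhs J c p V j"
    using LIMSEQ_unique iter[OF \<open>j \<le> J\<close>] by simp
qed

text \<open>Existence: iterate v \<mapsto> S(jacobi_rhs v) with S the inverse of (a+2c) s + g(s),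
  on the box [0,B] where a B bounds the data.\<close>
lemma step_eq_exists:
  assumes "a > 0" and "c \<ge> 0" and "nonneg_on J p" and g: "admissible_reaction J g"
  shows "\<exists>u. step_eq J a c g p u"
proof -
  define b where "b = a + 2 * c"
  have "b > 0" using assms(1,2) by (simp add: b_def)
  obtain S where S: "\<And>j r. j \<le> J \<Longrightarrow> 0 \<le> r \<Longrightarrow> 0 \<le> S j r \<and> S j r \<le> r / b \<and> b * S j r + g j (S j r) = r"
    and S_mono: "\<And>j r r'. j \<le> J \<Longrightarrow> 0 \<le> r \<Longrightarrow> r \<le> r' \<Longrightarrow> S j r \<le> S j r'"
    using reaction_inverse[OF g \<open>b > 0\<close>] by blast
  define B where "B = (\<Sum>j\<le>J. p j) / a"
  have p: "0 \<le> p j" "p j \<le> a * B" if "j \<le> J" for j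
    using assms(1,3) that member_le_sum[of j "{..J}" p] unfolding B_def nonneg_on_def by auto
  have rhs_nonneg: "0 \<le> jacobi_rhs J c p v j" and rhs_le: "jacobi_rhs J c p v j \<le> b * B"
    if "j \<le> J" "in_box J B v" for j v
    using jacobi_rhs_bounds[of c j J p a B v] p that \<open>c \<ge> 0\<close> unfolding b_def by blast+
  define F where "F v j = S j (jacobi_rhs J c p v j)" for v j
  obtain V where box: "\<And>n. in_box J B ((F ^^ n) (\<lambda>_. 0))"
    and conv: "\<And>j. j \<le> J \<Longrightarrow> (\<lambda>n. (F ^^ n) (\<lambda>_. 0) j) \<longlonglongrightarrow> V j"
  proof (rule monotone_iteration)
    show "0 \<le> B" using assms(1,3) by (auto simp: B_def nonneg_on_def intro!: sum_nonneg divide_nonneg_pos)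
    show "in_box J B (F v)" if "in_box J B v" for v
      unfolding in_box_def F_def
    proof (intro allI impI conjI)
      fix j assume "j \<le> J"
      note S_rhs = S[OF \<open>j \<le> J\<close> rhs_nonneg[OF \<open>j \<le> J\<close> that]]
      show "0 \<le> S j (jacobi_rhs J c p v j)" using S_rhs by blast
      have "jacobi_rhs J c p v j / b \<le> B"
        using rhs_le[OF \<open>j \<le> J\<close> that] \<open>b > 0\<close> by (simp add: pos_divide_le_eq mult.commute)
      then show "S j (jacobi_rhs J c p v j) \<le> B" using S_rhs by linarith
    qed
    show "\<forall>j\<le>J. F v j \<le> F w j" if "in_box J B v" "in_box J B w" "\<forall>k\<le>J. v k \<le> w k" for v w
      unfolding F_def using S_mono rhs_nonneg[OF _ that(1)] jacobi_rhs_mono[OF \<open>c \<ge> 0\<close> _ that(3)]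
      by blast
  qed blast
  have "step_eq J a c g p V"
  proof (rule step_eq_limit[OF _ conv])
    show "\<forall>j\<le>J. continuous_on UNIV (g j)" using g unfolding admissible_reaction_def by blast
    show "(a + 2 * c) * (F ^^ Suc n) (\<lambda>_. 0) j + g j ((F ^^ Suc n) (\<lambda>_. 0) j)
        = jacobi_rhs J c p ((F ^^ n) (\<lambda>_. 0)) j" if "j \<le> J" for n j
      using S[OF that rhs_nonneg[OF that box]] unfolding F_def b_def by simp
  qed
  then show ?thesis by blast
qed

lemma step_eq_well_posed:
  assumes "a > 0" and "c \<ge> 0" and "nonneg_on J p" and "admissible_reaction J g"
  shows "\<exists>u. step_eq J a c g p u"
    and "step_eq J a c g p u \<Longrightarrow> nonneg_on J u"
    and "step_eq J a c g p u \<Longrightarrow> step_eq J a c g p v \<Longrightarrow> \<forall>j\<le>J. u j = v j"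
proof -
  have sign: "\<forall>j\<le>J. \<forall>s<0. g j s \<le> 0"
    using assms(4) unfolding admissible_reaction_def by auto
  show "\<exists>u. step_eq J a c g p u" by (rule step_eq_exists[OF assms])
  show "nonneg_on J u" if "step_eq J a c g p u" by (rule step_eq_nonneg[OF assms(1-3) sign that])
  show "\<forall>j\<le>J. u j = v j" if "step_eq J a c g p u" and "step_eq J a c g p v"
    by (rule step_eq_unique[OF assms that])
qed

section \<open>Time marching\<close>

locale time_marching =
  fixes I J :: nat and step :: "nat \<Rightarrow> (nat \<Rightarrow> real) \<Rightarrow> (nat \<Rightarrow> real) \<Rightarrow> bool"
    and u0 :: "nat \<Rightarrow> real"
  assumes step_exists: "\<And>i q. i < I \<Longrightarrow> nonneg_on J q \<Longrightarrow> \<exists>u. step i q u"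
    and step_nonneg: "\<And>i q u. i < I \<Longrightarrow> nonneg_on J q \<Longrightarrow> step i q u \<Longrightarrow> nonneg_on J u"
    and step_unique: "\<And>i q u v. i < I \<Longrightarrow> nonneg_on J q \<Longrightarrow> step i q u \<Longrightarrow> step i q v
      \<Longrightarrow> \<forall>j\<le>J. u j = v j"
    and step_local: "\<And>i q q' u. \<forall>j\<le>J. q j = q' j \<Longrightarrow> step i q u \<Longrightarrow> step i q' u"
    and init_nonneg: "nonneg_on J u0"
begin

definition solution :: "(nat \<Rightarrow> nat \<Rightarrow> real) \<Rightarrow> bool" where
  "solution \<psi> \<longleftrightarrow> (\<forall>i<I. step i (\<psi> i) (\<psi> (Suc i))) \<and> (\<forall>j\<le>J. \<psi> 0 j = u0 j)"

lemma solution_nonneg: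
  assumes "solution \<psi>" and "i \<le> I"
  shows "nonneg_on J (\<psi> i)"
  using \<open>i \<le> I\<close>
proof (induction i)
  case 0
  show ?case using assms(1) init_nonneg unfolding solution_def nonneg_on_def by simp
next
  case (Suc i)
  then have "i < I" by simp
  then have "step i (\<psi> i) (\<psi> (Suc i))" using assms(1) unfolding solution_def by blast
  then show ?case using step_nonneg[OF \<open>i < I\<close>] Suc by simp
qed

lemma solution_unique:
  assumes "solution \<psi>" and "solution \<psi>'" and "i \<le> I"
  shows "\<forall>j\<le>J. \<psi>' i j = \<psi> i j"
  using \<open>i \<le> I\<close>
proof (induction i)
  case 0
  show ?case using assms(1,2) unfolding solution_def by simp
next
  case (Suc i)
  then have "i < I" by simp
  have "step i (\<psi>' i) (\<psi>' (Suc i))" using assms(2) \<open>i < I\<close> unfolding solution_def by blast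
  moreover have "\<forall>j\<le>J. \<psi>' i j = \<psi> i j" using Suc.IH \<open>i < I\<close> by simp
  ultimately have "step i (\<psi> i) (\<psi>' (Suc i))" using step_local by blast
  moreover have "step i (\<psi> i) (\<psi> (Suc i))" using assms(1) \<open>i < I\<close> unfolding solution_def by blast
  moreover have "nonneg_on J (\<psi> i)" using solution_nonneg[OF assms(1)] \<open>i < I\<close> by simp
  ultimately show ?case using step_unique[OF \<open>i < I\<close>] by metis
qed

text \<open>The solution is built step by step; positivity of the current state keeps the
  next step solvable.\<close>
lemma solution_exists: "\<exists>\<psi>. solution \<psi>"
proof -
  define \<psi> where "\<psi> = rec_nat u0 (\<lambda>i q. SOME u. step i q u)"
  have next_step: "step i (\<psi> i) (\<psi> (Suc i))" if "i < I" "nonneg_on J (\<psi> i)" for i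
    using someI_ex[OF step_exists[OF that]] by (simp add: \<psi>_def)
  have nonneg: "nonneg_on J (\<psi> i)" if "i \<le> I" for i
    using that
  proof (induction i)
    case 0
    show ?case using init_nonneg by (simp add: \<psi>_def)
  next
    case (Suc i)
    then have "i < I" and "nonneg_on J (\<psi> i)" by simp_all
    then show ?case using next_step step_nonneg by blast
  qed
  have "solution \<psi>" unfolding solution_def using next_step nonneg by (simp add: \<psi>_def)
  then show ?thesis by blast
qed

end

lemma implicit_scheme_time_marching:
  assumes "a > 0" and "c \<ge> 0" and "\<And>i. i < I \<Longrightarrow> admissible_reaction J (g i)"
    and "nonneg_on J u0"
  shows "time_marching I J (\<lambda>i q u. step_eq J a c (g i) (\<lambda>j. a * q j) u) u0"
proof
  have data: "nonneg_on J (\<lambda>j. a * q j)" if "nonneg_on J q" for q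
    using that \<open>a > 0\<close> by (simp add: nonneg_on_def)
  note well_posed = step_eq_well_posed[OF assms(1,2) data assms(3)]
  show "\<exists>u. step_eq J a c (g i) (\<lambda>j. a * q j) u" if "i < I" "nonneg_on J q" for i q
    using well_posed(1) that by blast
  show "nonneg_on J u" if "i < I" "nonneg_on J q" "step_eq J a c (g i) (\<lambda>j. a * q j) u" for i q u
    using well_posed(2) that by blast
  show "\<forall>j\<le>J. u j = v j" if "i < I" "nonneg_on J q"
    "step_eq J a c (g i) (\<lambda>j. a * q j) u" "step_eq J a c (g i) (\<lambda>j. a * q j) v" for i q u v
    using well_posed(3) that by blast
  show "step_eq J a c (g i) (\<lambda>j. a * q' j) u"
    if "\<forall>j\<le>J. q j = q' j" "step_eq J a c (g i) (\<lambda>j. a * q j) u" for i q q' u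
    using that by (simp add: step_eq_def)
qed (rule assms(4))

section \<open>The scheme for psi\<close>

text \<open>Grid points x_j = j/J lie in the unit interval, where the hypotheses on m0 and f hold.\<close>
lemma grid_point_in_unit: "j \<le> J \<Longrightarrow> real j / real J \<in> {0..1}"
  by (auto simp: divide_le_eq_1)

text \<open>The nonlinear term of the scheme, written as a reaction -f(x_j, phi s) s / sigma^2
  acting on the unknown s = psi_{i+1,j}.\<close>
definition reaction ::
  "real \<Rightarrow> nat \<Rightarrow> (real \<Rightarrow> real \<Rightarrow> real) \<Rightarrow> (nat \<Rightarrow> nat \<Rightarrow> real) \<Rightarrow> nat \<Rightarrow> nat \<Rightarrow> real \<Rightarrow> real" where
  "reaction \<sigma> J f \<phi> i j s = - (1 / \<sigma>^2 * f (real j / real J) (\<phi> (Suc i) j * s) * s)"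

lemma absorption_admissible:
  fixes h :: "real \<Rightarrow> real"
  assumes cont: "continuous_on UNIV h" and anti: "antimono h" and nonpos: "\<And>y. h y \<le> 0"
    and "k > 0"
  shows "continuous_on UNIV (\<lambda>s. - (h (k * s) * s))"
    and "\<And>s. s \<le> 0 \<Longrightarrow> - (h (k * s) * s) \<le> 0"
    and "\<And>s. 0 \<le> s \<Longrightarrow> 0 \<le> - (h (k * s) * s)"
    and "mono_on {0..} (\<lambda>s. - (h (k * s) * s))"
proof -
  show "continuous_on UNIV (\<lambda>s. - (h (k * s) * s))"
    by (intro continuous_intros continuous_on_compose2[OF cont]) auto
  show "- (h (k * s) * s) \<le> 0" if "s \<le> 0" for s
    using mult_nonpos_nonpos[OF nonpos that] by simp
  show "0 \<le> - (h (k * s) * s)" if "0 \<le> s" for s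
    using mult_nonpos_nonneg[OF nonpos that] by simp
  show "mono_on {0..} (\<lambda>s. - (h (k * s) * s))"
  proof (rule mono_onI)
    fix s t :: real assume "s \<in> {0..}" "t \<in> {0..}" "s \<le> t"
    have "- h (k * s) \<le> - h (k * t)"
      using antimonoD[OF anti] \<open>k > 0\<close> \<open>s \<le> t\<close> by simp
    then have "- h (k * s) * s \<le> - h (k * t) * t"
      using \<open>s \<in> {0..}\<close> \<open>s \<le> t\<close> nonpos by (intro mult_mono) auto
    then show "- (h (k * s) * s) \<le> - (h (k * t) * t)" by simp
  qed
qed

lemma reaction_admissible:
  assumes "\<sigma> > 0"
    and cont: "continuous_on ({0..1} \<times> UNIV) (\<lambda>(x, y). f x y)"
    and anti: "\<forall>x\<in>{0..1}. antimono (f x)" and nonpos: "\<forall>x\<in>{0..1}. \<forall>y. f x y \<le> 0"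
    and pos: "\<forall>j\<le>J. 0 < \<phi> (Suc i) j"
  shows "admissible_reaction J (reaction \<sigma> J f \<phi> i)"
  unfolding admissible_reaction_def
proof (intro allI impI)
  fix j assume "j \<le> J"
  define x where "x = real j / real J"
  have "x \<in> {0..1}" unfolding x_def using \<open>j \<le> J\<close> by (rule grid_point_in_unit)
  define h where "h y = 1 / \<sigma>^2 * f x y" for y
  have "continuous_on UNIV (\<lambda>y. (\<lambda>(x, y). f x y) (x, y))"
    by (rule continuous_on_compose2[OF cont]) (use \<open>x \<in> {0..1}\<close> in \<open>auto intro!: continuous_intros\<close>)
  then have "continuous_on UNIV h" unfolding h_def by (intro continuous_intros) simp
  moreover have "antimono h"
    using anti \<open>x \<in> {0..1}\<close> \<open>\<sigma> > 0\<close> unfolding h_def by (auto simp: antimono_def divide_right_mono)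
  moreover have "h y \<le> 0" for y
    using nonpos \<open>x \<in> {0..1}\<close> \<open>\<sigma> > 0\<close> unfolding h_def by (simp add: divide_nonpos_pos)
  moreover have "reaction \<sigma> J f \<phi> i j = (\<lambda>s. - (h (\<phi> (Suc i) j * s) * s))"
    by (simp add: reaction_def h_def x_def fun_eq_iff)
  ultimately show "continuous_on UNIV (reaction \<sigma> J f \<phi> i j) \<and>
      (\<forall>s\<le>0. reaction \<sigma> J f \<phi> i j s \<le> 0) \<and> (\<forall>s\<ge>0. 0 \<le> reaction \<sigma> J f \<phi> i j s) \<and>
      mono_on {0..} (reaction \<sigma> J f \<phi> i j)"
    using absorption_admissible[of h "\<phi> (Suc i) j"] pos \<open>j \<le> J\<close> by simp
qed

text \<open>The scheme is exactly the time marching of the implicit steps with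
  a = 1/dt, c = sigma^2/(2 dx^2) and data psi_i / dt.\<close>
lemma psi_scheme_as_marching:
  assumes "T > 0" and "I > 0"
  shows "psi_scheme T \<sigma> I J f m0 \<phi> \<psi> \<longleftrightarrow>
    (\<forall>i<I. step_eq J (real I / T) (\<sigma>^2 / 2 * real J ^ 2) (reaction \<sigma> J f \<phi> i)
               (\<lambda>j. real I / T * \<psi> i j) (\<psi> (Suc i)))
    \<and> (\<forall>j\<le>J. \<psi> 0 j = m0 (real j / real J) / \<phi> 0 j)"
proof -
  have lap_form: "right_nb J \<psi> (i + 1) j - 2 * \<psi> (i + 1) j + left_nb \<psi> (i + 1) j = lap J (\<psi> (Suc i)) j"
    for i j by (simp add: right_nb_def left_nb_def lap_def nbr_def nbl_def)
  have row: "(u - q) / (T / real I) - \<sigma>^2 / 2 * L / (1 / real J)^2 = F \<longleftrightarrow>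
      real I / T * u - \<sigma>^2 / 2 * real J ^ 2 * L + - F = real I / T * q" for u q L F :: real
  proof -
    have "(u - q) / (T / real I) = real I / T * u - real I / T * q"
      using assms by (simp add: field_simps)
    moreover have "\<sigma>^2 / 2 * L / (1 / real J)^2 = \<sigma>^2 / 2 * real J ^ 2 * L"
      by (simp add: power_one_over)
    ultimately show ?thesis by linarith
  qed
  show ?thesis
    unfolding psi_scheme_def Let_def lap_form row step_eq_def reaction_def by simp
qed

text \<open>The scheme is a time marching of well-posed, positivity preserving implicit steps:
  the reaction is admissible because phi >= eps > 0, and the initial datum m0/phi is nonnegative.\<close>
theorem proposition9:
  fixes T \<sigma> \<epsilon> :: real and I J :: nat
    and m0 :: "real \<Rightarrow> real" and f :: "real \<Rightarrow> real \<Rightarrow> real"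
    and \<phi> :: "nat \<Rightarrow> nat \<Rightarrow> real"
  assumes "T > 0" and "\<sigma> > 0" and "I > 0" and "J > 0"
    and "bounded (m0 ` {0..1})" and "\<forall>x\<in>{0..1}. m0 x \<ge> 0"
    and "continuous_on ({0..1} \<times> UNIV) (\<lambda>(x, y). f x y)"
    and "\<forall>x\<in>{0..1}. antimono (f x)"
    and "bounded ((\<lambda>(x, y). f x y) ` ({0..1} \<times> UNIV))"
    and "\<forall>x\<in>{0..1}. \<forall>y. f x y \<le> 0"
    and "\<epsilon> > 0"
    and "in_M_eps I J \<epsilon> \<phi>"
  shows "(\<exists>\<psi>. psi_scheme T \<sigma> I J f m0 \<phi> \<psi>
            \<and> (\<forall>\<psi>'. psi_scheme T \<sigma> I J f m0 \<phi> \<psi>' \<longrightarrow>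
                   (\<forall>i\<le>I. \<forall>j\<le>J. \<psi>' i j = \<psi> i j)))
         \<and> (\<forall>\<psi>. psi_scheme T \<sigma> I J f m0 \<phi> \<psi> \<longrightarrow> in_M_eps I J 0 \<psi>)"
proof -
  have \<phi>_pos: "0 < \<phi> i j" if "i \<le> I" "j \<le> J" for i j
    using assms(11,12) that unfolding in_M_eps_def by force
  define u0 where "u0 j = m0 (real j / real J) / \<phi> 0 j" for j
  interpret time_marching I J
    "\<lambda>i q u. step_eq J (real I / T) (\<sigma>^2 / 2 * real J ^ 2) (reaction \<sigma> J f \<phi> i) (\<lambda>j. real I / T * q j) u"
    u0
  proof (rule implicit_scheme_time_marching)
    show "0 < real I / T" using assms(1,3) by simp
    show "admissible_reaction J (reaction \<sigma> J f \<phi> i)" if "i < I" for i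
      using reaction_admissible[OF assms(2,7,8,10)] \<phi>_pos that by simp
    show "nonneg_on J u0"
      using assms(6) grid_point_in_unit \<phi>_pos unfolding nonneg_on_def u0_def by (simp add: less_imp_le)
  qed simp
  have scheme: "psi_scheme T \<sigma> I J f m0 \<phi> \<psi> \<longleftrightarrow> solution \<psi>" for \<psi>
    unfolding psi_scheme_as_marching[OF assms(1,3)] solution_def u0_def ..
  show ?thesis
    using solution_exists solution_unique solution_nonneg
    unfolding scheme in_M_eps_def nonneg_on_def by blast
qed

end
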